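(* Let $(X,d)$ be a finite metric space whose distances are integers in $[0,\frac{16k}{\varepsilon}]$, for a positive integer $k$ and $\varepsilon>0$. For a nonempty $S\subseteq X$ and $t\in[k]$, let $(\mathcal{C}_1,\dots,\mathcal{C}_t)$ be the output of $\mathtt{detRecMSD}(S,t)$ and let $\operatorname{opt}_i(S)$ denote the cost of an optimal $i$-clustering of $S$. Then $\operatorname{cost}(\mathcal{C}_r)=\operatorname{opt}_r(S)$ for every $r\in\{1,\dots,t\}$.
   Context: An $i$-clustering of $S$ is a collection of at most $i$ subsets whose union is $S$; its cost is the sum of the diameters $\operatorname{diam}(C)=\max_{p,q\in C}d(p,q)$ of its sets. $\operatorname{Ball}(x,R)=\{z\in X:d(x,z)\le R\}$. The deterministic procedure $\mathtt{detRecMSD}(S,t)$ is: set $\mathcal{C}_i\gets\{S\}$ for all $i\in\{1,\dots,t\}$; if $t=1$ or $|S|=1$ return $(\mathcal{C}_1,\dots,\mathcal{C}_t)$. Otherwise let $x,y\in S$ with $d(x,y)=\operatorname{diam}(S)$; for each integer $R=0,1,\dots,\operatorname{diam}(S)-1$: let $S_1=S\cap\operatorname{Ball}(x,R)$, $S_2=S\setminus\operatorname{Ball}(x,R)$, compute $\mathcal{A}=\mathtt{detRecMSD}(S_1,t-1)$ and $\mathcal{B}=\mathtt{detRecMSD}(S_2,t-1)$, and for all $i,j\in\{1,\dots,t-1\}$ with $i+j\le t$, if $\operatorname{cost}(\mathcal{A}_i\cup\mathcal{B}_j)<\operatorname{cost}(\mathcal{C}_{i+j})$ set $\mathcal{C}_{i+j}\gets\mathcal{A}_i\cup\mathcal{B}_j$.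 Finally return $(\mathcal{C}_1,\dots,\mathcal{C}_t)$. *)

theory Defs
  imports Complex_Main
begin

definition diam :: "('a \<Rightarrow> 'a \<Rightarrow> int) \<Rightarrow> 'a set \<Rightarrow> int" where
  "diam d C = (if C = {} then 0 else Max {d p q | p q. p \<in> C \<and> q \<in> C})"

definition cost :: "('a \<Rightarrow> 'a \<Rightarrow> int) \<Rightarrow> 'a set set \<Rightarrow> int" where
  "cost d \<C> = (\<Sum>C\<in>\<C>. diam d C)"

definition is_clustering :: "nat \<Rightarrow> 'a set \<Rightarrow> 'a set set \<Rightarrow> bool" where
  "is_clustering i S \<C> \<longleftrightarrow> \<C> \<subseteq> Pow S \<and> finite \<C> \<and> card \<C> \<le> i \<and> \<Union>\<C> = S"

definition opt :: "('a \<Rightarrow> 'a \<Rightarrow> int) \<Rightarrow> nat \<Rightarrow> 'a set \<Rightarrow> int" where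
  "opt d i S = Min {cost d \<C> | \<C>. is_clustering i S \<C>}"

text \<open>The choice of the diametral point x is
  delegated to the parameter pick; the output is the map i \<mapsto> C_i
  (meaningful for i in {1..t}).  The loops over R and over the pairs (i,j)
  are executed in increasing order (i outer, j inner).\<close>
primrec detRecMSD ::
  "('a set \<Rightarrow> 'a) \<Rightarrow> ('a \<Rightarrow> 'a \<Rightarrow> int) \<Rightarrow> nat \<Rightarrow> 'a set \<Rightarrow> nat \<Rightarrow> 'a set set" where
  "detRecMSD pick d 0 S = (\<lambda>i. {S})"
| "detRecMSD pick d (Suc t') S =
     (if t' = 0 \<or> card S = 1 then (\<lambda>i. {S})
      else
        (let x = pick S;
             pairs = [(i, j). i \<leftarrow> [1..<Suc t'], j \<leftarrow> [1..<Suc t'], i + j \<le> Suc t'];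
             step = (\<lambda>R \<C>.
               (let S1 = {z \<in> S. d x z \<le> int R};
                    S2 = S - S1;
                    \<A> = detRecMSD pick d t' S1;
                    \<B> = detRecMSD pick d t' S2
                in fold (\<lambda>(i, j) \<C>.
                      if cost d (\<A> i \<union> \<B> j) < cost d (\<C> (i + j))
                      then \<C>(i + j := \<A> i \<union> \<B> j) else \<C>) pairs \<C>))
         in fold step [0..<nat (diam d S)] (\<lambda>i. {S})))"

end

theory Submission
  imports Defs
begin

text \<open>
  The output C_r is the cheapest among {S} and the candidates A_i \<union> B_j with
  i + j = r, all of which are r-clusterings, so it suffices to exhibit for every r-clustering P
  a candidate that costs at most cost P. Let x be the diametral point chosen for S, D = diam S,
  and r \<ge> 2 (for r = 1, P = {S}). If some radius R < D separates P, i.e. every cluster lies inside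
  Ball(x, R) or outside it, then P splits into an i-clustering of the ball part and a
  j-clustering of the rest with i + j = r, and the recursive calls are optimal for both parts.
  Otherwise every integer radius in [0, D) is cut by some cluster C; by the triangle inequality
  C cuts at most diam C of them, so cost P \<ge> D. This is matched by the split at R = 0:
  the cluster {x} of cost 0 together with an optimal (r - 1)-clustering of S - {x}, whose cost
  is at most diam (S - {x}) \<le> D.
\<close>

definition keep_cheaper :: "('c \<Rightarrow> 'o::linorder) \<Rightarrow> 'b \<times> 'c \<Rightarrow> ('b \<Rightarrow> 'c) \<Rightarrow> 'b \<Rightarrow> 'c" where
  "keep_cheaper cst = (\<lambda>(k, Y) C. if cst Y < cst (C k) then C(k := Y) else C)"

lemma fold_keep_cheaper_le_init: "cst (fold (keep_cheaper cst) xs C k) \<le> cst (C k)"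
proof (induction xs arbitrary: C)
  case (Cons x xs)
  have "cst (keep_cheaper cst x C k) \<le> cst (C k)"
    by (cases x) (auto simp: keep_cheaper_def)
  then show ?case
    using Cons.IH[of "keep_cheaper cst x C"] by simp
qed simp

lemma fold_keep_cheaper_le_candidate:
  "(k, Y) \<in> set xs \<Longrightarrow> cst (fold (keep_cheaper cst) xs C k) \<le> cst Y"
proof (induction xs arbitrary: C)
  case (Cons x xs)
  show ?case
  proof (cases "x = (k, Y)")
    case True
    have "cst (keep_cheaper cst (k, Y) C k) \<le> cst Y"
      by (auto simp: keep_cheaper_def)
    then show ?thesis
      using True order_trans[OF fold_keep_cheaper_le_init] by simp
  next
    case False
    then show ?thesis using Cons by simp
  qed
qed simp

lemma fold_keep_cheaper_cases:
  "fold (keep_cheaper cst) xs C k = C k \<or> (k, fold (keep_cheaper cst) xs C k) \<in> set xs"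
proof (induction xs arbitrary: C)
  case (Cons x xs)
  obtain k' Y where x: "x = (k', Y)" by fastforce
  have "keep_cheaper cst x C k = C k \<or> (k = k' \<and> keep_cheaper cst x C k = Y)"
    by (simp add: x keep_cheaper_def)
  then show ?case
    using Cons.IH[of "keep_cheaper cst x C"] x by auto
qed simp

lemma fold_keep_cheaper_map:
  "fold (keep_cheaper cst) (map (\<lambda>(i, j). (i + j, Y i j)) ps) =
   fold (\<lambda>(i, j) C. if cst (Y i j) < cst (C (i + j)) then C(i + j := Y i j) else C) ps"
  by (induction ps) (auto simp: keep_cheaper_def)

lemma fold_concat_map: "fold f (concat (map g xs)) = fold (\<lambda>x. fold f (g x)) xs"
  by (induction xs) auto

text \<open>With f = d x, the threshold R is crossed by C iff C meets both Ball(x, R) and its complement.\<close>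

definition thresholds_crossed :: "('a \<Rightarrow> int) \<Rightarrow> 'a set \<Rightarrow> int set" where
  "thresholds_crossed f C = {R. \<exists>p\<in>C. \<exists>q\<in>C. f q \<le> R \<and> R < f p}"

lemma card_thresholds_crossed_le:
  assumes "finite C" and spread: "\<And>p q. p \<in> C \<Longrightarrow> q \<in> C \<Longrightarrow> f p - f q \<le> w" and "0 \<le> w"
  shows "finite (thresholds_crossed f C)" "int (card (thresholds_crossed f C)) \<le> w"
proof -
  have "\<exists>m. thresholds_crossed f C \<subseteq> {m..<m + w}"
  proof (cases "C = {}")
    case False
    obtain q0 where q0: "q0 \<in> C" "\<And>q. q \<in> C \<Longrightarrow> f q0 \<le> f q"
      using ex_is_arg_min_if_finite[OF \<open>finite C\<close> False, of f]
      unfolding is_arg_min_linorder by blast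
    have "thresholds_crossed f C \<subseteq> {f q0..<f q0 + w}"
      using q0 spread[OF _ q0(1)] by (force simp: thresholds_crossed_def)
    then show ?thesis ..
  qed (simp add: thresholds_crossed_def)
  then obtain m where sub: "thresholds_crossed f C \<subseteq> {m..<m + w}" ..
  then show "finite (thresholds_crossed f C)"
    by (rule finite_subset) simp
  have "card (thresholds_crossed f C) \<le> card {m..<m + w}"
    using sub by (intro card_mono) simp_all
  then show "int (card (thresholds_crossed f C)) \<le> w"
    using \<open>0 \<le> w\<close> by simp
qed

lemma interval_le_sum_if_thresholds_crossed:
  assumes "finite P" and cover: "{a..<b} \<subseteq> (\<Union>C\<in>P. thresholds_crossed f C)"
    and "\<And>C. C \<in> P \<Longrightarrow> finite C" "\<And>C. C \<in> P \<Longrightarrow> 0 \<le> w C"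
    and "\<And>C p q. C \<in> P \<Longrightarrow> p \<in> C \<Longrightarrow> q \<in> C \<Longrightarrow> f p - f q \<le> w C"
  shows "b - a \<le> (\<Sum>C\<in>P. w C)"
proof -
  have fin: "finite (thresholds_crossed f C)" and card: "int (card (thresholds_crossed f C)) \<le> w C"
    if "C \<in> P" for C
    using card_thresholds_crossed_le[of C f "w C"] that assms(3-5) by auto
  have "b - a \<le> int (card {a..<b})"
    by simp
  also have "\<dots> \<le> int (card (\<Union>C\<in>P. thresholds_crossed f C))"
  proof -
    have "card {a..<b} \<le> card (\<Union>C\<in>P. thresholds_crossed f C)"
      using cover fin \<open>finite P\<close> by (intro card_mono) auto
    then show ?thesis by linarith
  qed
  also have "\<dots> \<le> (\<Sum>C\<in>P. int (card (thresholds_crossed f C)))"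
    using card_UN_le[OF \<open>finite P\<close>] by (simp flip: of_nat_sum)
  also have "\<dots> \<le> (\<Sum>C\<in>P. w C)"
    using card by (rule sum_mono)
  finally show ?thesis .
qed

lemma diam_eq_Max: "C \<noteq> {} \<Longrightarrow> diam d C = Max (case_prod d ` (C \<times> C))"
  unfolding diam_def by (auto intro!: arg_cong[where f = Max])

lemma dist_le_diam:
  assumes "finite C" "p \<in> C" "q \<in> C"
  shows "d p q \<le> diam d C"
proof -
  have "d p q \<le> Max (case_prod d ` (C \<times> C))"
    using assms by (intro Max_ge) force+
  then show ?thesis
    using assms by (subst diam_eq_Max) auto
qed

lemma diam_attained:
  assumes "finite C" "C \<noteq> {}"
  obtains p q where "p \<in> C" "q \<in> C" "diam d C = d p q"
proof -
  have "diam d C \<in> case_prod d ` (C \<times> C)"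
    using assms by (simp add: diam_eq_Max)
  then show ?thesis
    using that by auto
qed

lemma diam_nonneg:
  assumes "finite C" "\<And>p. p \<in> C \<Longrightarrow> 0 \<le> d p p"
  shows "0 \<le> diam d C"
proof (cases "C = {}")
  case False
  then obtain p where "p \<in> C" by blast
  then show ?thesis
    using assms dist_le_diam[of C p p d] by force
qed (simp add: diam_def)

lemma diam_mono: "finite B \<Longrightarrow> A \<subseteq> B \<Longrightarrow> A \<noteq> {} \<Longrightarrow> diam d A \<le> diam d B"
  by (metis diam_attained[of A] dist_le_diam finite_subset subsetD)

lemma diam_singleton: "diam d {p} = d p p"
  by (simp add: diam_def)

lemma cost_Un_le:
  assumes "finite P" "finite Q" "\<And>C. C \<in> P \<inter> Q \<Longrightarrow> 0 \<le> diam d C"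
  shows "cost d (P \<union> Q) \<le> cost d P + cost d Q"
proof -
  have "cost d (P \<union> Q) + cost d (P \<inter> Q) = cost d P + cost d Q"
    unfolding cost_def using sum.union_inter[OF assms(1,2)] .
  moreover have "0 \<le> cost d (P \<inter> Q)"
    unfolding cost_def using assms(3) by (rule sum_nonneg)
  ultimately show ?thesis by linarith
qed

lemma is_clustering_Un:
  "is_clustering i S P \<Longrightarrow> is_clustering j T Q \<Longrightarrow> is_clustering (i + j) (S \<union> T) (P \<union> Q)"
  unfolding is_clustering_def by (auto intro: order_trans[OF card_Un_le])

lemma is_clustering_singleton: "1 \<le> r \<Longrightarrow> is_clustering r S {S}"
  unfolding is_clustering_def by auto

lemma is_clustering_1: "is_clustering 1 S P \<Longrightarrow> S \<noteq> {} \<Longrightarrow> P = {S}"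
proof -
  assume P: "is_clustering 1 S P" and "S \<noteq> {}"
  then have "P \<noteq> {}" "finite P" "card P \<le> 1"
    by (auto simp: is_clustering_def)
  then have "card P = 1"
    by (simp add: card_gt_0_iff le_antisym Suc_le_eq)
  then obtain C where "P = {C}"
    by (rule card_1_singletonE)
  then show "P = {S}"
    using P by (simp add: is_clustering_def)
qed

lemma is_clustering_split:
  assumes P: "is_clustering r S P" and "T \<subseteq> S" "T \<noteq> {}" "S - T \<noteq> {}"
    and sep: "\<forall>C\<in>P. C \<subseteq> T \<or> C \<subseteq> S - T"
  obtains i j PA PB where "1 \<le> i" "1 \<le> j" "i + j = r"
    "is_clustering i T PA" "is_clustering j (S - T) PB" "P = PA \<union> PB" "PA \<inter> PB = {}"
proof -
  define PA where "PA = {C \<in> P. C \<subseteq> T}"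
  define PB where "PB = P - PA"
  have fin: "finite PA" "finite PB" and cover: "\<Union>P = S" and card_P: "card P \<le> r"
    using P by (auto simp: is_clustering_def PA_def PB_def)
  have "\<Union>PA = T"
    using cover sep \<open>T \<subseteq> S\<close> unfolding PA_def by blast
  moreover have "\<Union>PB = S - T"
    using cover sep unfolding PA_def PB_def by blast
  moreover have "P = PA \<union> PB" "PA \<inter> PB = {}"
    by (auto simp: PA_def PB_def)
  ultimately have "0 < card PA" "0 < card PB" "card PA + card PB \<le> r"
    using \<open>T \<noteq> {}\<close> \<open>S - T \<noteq> {}\<close> card_P card_Un_disjoint[OF fin] fin
    by (auto simp: card_gt_0_iff)
  then have "1 \<le> r - card PB" "1 \<le> card PB" "card PA \<le> r - card PB"
    by linarith+
  then show ?thesis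
    using that[of "r - card PB" "card PB" PA PB] \<open>\<Union>PA = T\<close> \<open>\<Union>PB = S - T\<close> \<open>P = PA \<union> PB\<close>
      \<open>PA \<inter> PB = {}\<close> fin P
    by (auto simp: is_clustering_def)
qed

definition optimal_clustering :: "('a \<Rightarrow> 'a \<Rightarrow> int) \<Rightarrow> nat \<Rightarrow> 'a set \<Rightarrow> 'a set set \<Rightarrow> bool" where
  "optimal_clustering d r S \<C> \<longleftrightarrow>
     is_clustering r S \<C> \<and> (\<forall>\<P>. is_clustering r S \<P> \<longrightarrow> cost d \<C> \<le> cost d \<P>)"

lemma opt_eq_cost_if_optimal_clustering:
  assumes "finite S" "optimal_clustering d r S \<C>"
  shows "opt d r S = cost d \<C>"
proof -
  have "{cost d \<P> | \<P>. is_clustering r S \<P>} \<subseteq> cost d ` Pow (Pow S)"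
    by (auto simp: is_clustering_def)
  then have "finite {cost d \<P> | \<P>. is_clustering r S \<P>}"
    using \<open>finite S\<close> finite_subset by blast
  then show ?thesis
    using assms(2) unfolding opt_def optimal_clustering_def by (intro Min_eqI) auto
qed

definition index_pairs :: "nat \<Rightarrow> (nat \<times> nat) list" where
  "index_pairs t = [(i, j). i \<leftarrow> [1..<Suc t], j \<leftarrow> [1..<Suc t], i + j \<le> Suc t]"

lemma mem_index_pairs: "(i, j) \<in> set (index_pairs t) \<longleftrightarrow> 1 \<le> i \<and> 1 \<le> j \<and> i + j \<le> Suc t"
  by (auto simp: index_pairs_def)

locale diametral_pick =
  fixes X :: "'a set" and d :: "'a \<Rightarrow> 'a \<Rightarrow> int" and pick :: "'a set \<Rightarrow> 'a"
  assumes finite_X: "finite X"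
    and d_eq_0_iff: "p \<in> X \<Longrightarrow> q \<in> X \<Longrightarrow> d p q = 0 \<longleftrightarrow> p = q"
    and d_triangle: "p \<in> X \<Longrightarrow> q \<in> X \<Longrightarrow> z \<in> X \<Longrightarrow> d p z \<le> d p q + d q z"
    and d_nonneg: "p \<in> X \<Longrightarrow> q \<in> X \<Longrightarrow> 0 \<le> d p q"
    and pick_diametral: "T \<subseteq> X \<Longrightarrow> T \<noteq> {} \<Longrightarrow> pick T \<in> T \<and> (\<exists>y\<in>T. d (pick T) y = diam d T)"
begin

lemma finite_if_subset_X: "S \<subseteq> X \<Longrightarrow> finite S"
  using finite_X finite_subset by blast

lemma diam_nonneg_if_subset_X: "C \<subseteq> X \<Longrightarrow> 0 \<le> diam d C"
  using d_nonneg by (blast intro: diam_nonneg finite_if_subset_X)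

lemma cost_nonneg:
  assumes "is_clustering r S P" "S \<subseteq> X"
  shows "0 \<le> cost d P"
proof -
  have "C \<subseteq> X" if "C \<in> P" for C
    using assms that by (auto simp: is_clustering_def)
  then show ?thesis
    unfolding cost_def by (intro sum_nonneg diam_nonneg_if_subset_X)
qed

lemma cost_Un_le_if_clusterings:
  assumes "is_clustering i S P" "is_clustering j T Q" "S \<subseteq> X" "T \<subseteq> X"
  shows "cost d (P \<union> Q) \<le> cost d P + cost d Q"
proof (rule cost_Un_le)
  show "finite P" "finite Q"
    using assms by (auto simp: is_clustering_def)
  show "0 \<le> diam d C" if "C \<in> P \<inter> Q" for C
    using assms that by (intro diam_nonneg_if_subset_X) (auto simp: is_clustering_def)
qed

definition ball_part :: "'a set \<Rightarrow> nat \<Rightarrow> 'a set" where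
  "ball_part S R = {z \<in> S. d (pick S) z \<le> int R}"

lemma ball_part_subset: "ball_part S R \<subseteq> S"
  by (auto simp: ball_part_def)

lemma radius_in_thresholds_crossed:
  assumes "C \<subseteq> S" "\<not> C \<subseteq> ball_part S R" "\<not> C \<subseteq> S - ball_part S R"
  shows "int R \<in> thresholds_crossed (d (pick S)) C"
  using assms unfolding ball_part_def thresholds_crossed_def by (auto simp: not_le)

lemma pick_in_ball_part:
  assumes "S \<subseteq> X" "S \<noteq> {}"
  shows "pick S \<in> ball_part S R"
proof -
  have "pick S \<in> S"
    using pick_diametral assms by blast
  moreover have "d (pick S) (pick S) = 0"
    using d_eq_0_iff \<open>pick S \<in> S\<close> assms(1) by blast
  ultimately show ?thesis
    by (simp add: ball_part_def)
qed

lemma ball_part_0: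
  assumes "S \<subseteq> X" "S \<noteq> {}"
  shows "ball_part S 0 = {pick S}"
proof (intro equalityI subsetI)
  fix z assume "z \<in> ball_part S 0"
  then have "z \<in> X" "d (pick S) z \<le> 0"
    using assms(1) by (auto simp: ball_part_def)
  moreover have "pick S \<in> X"
    using pick_diametral assms by blast
  ultimately have "d (pick S) z = 0"
    using d_nonneg[of "pick S" z] by linarith
  then show "z \<in> {pick S}"
    using d_eq_0_iff \<open>z \<in> X\<close> \<open>pick S \<in> X\<close> by auto
qed (use pick_in_ball_part assms in simp)

lemma outside_ball_part_nonempty:
  assumes "S \<subseteq> X" "S \<noteq> {}" "R < nat (diam d S)"
  shows "S - ball_part S R \<noteq> {}"
proof -
  obtain y where "y \<in> S" "d (pick S) y = diam d S"
    using pick_diametral assms(1,2) by blast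
  then have "y \<in> S - ball_part S R"
    using assms(3) by (auto simp: ball_part_def)
  then show ?thesis by blast
qed

lemma diam_pos:
  assumes "S \<subseteq> X" "S \<noteq> {}" "card S \<noteq> 1"
  shows "0 < diam d S"
proof -
  obtain p where p: "p \<in> S"
    using assms(2) by blast
  moreover have "S \<noteq> {p}"
    using assms(3) by auto
  ultimately obtain q where q: "q \<in> S" "q \<noteq> p"
    by blast
  have "p \<in> X" "q \<in> X"
    using p q assms(1) by blast+
  then have "0 < d p q"
    using d_eq_0_iff d_nonneg q(2) by (simp add: order.strict_iff_order)
  also have "\<dots> \<le> diam d S"
    using dist_le_diam[OF finite_if_subset_X[OF assms(1)] p q(1)] .
  finally show ?thesis .
qed

lemma dist_diff_le_diam:
  assumes "x \<in> X" "C \<subseteq> X" "p \<in> C" "q \<in> C"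
  shows "d x p - d x q \<le> diam d C"
proof -
  have "d x p \<le> d x q + d q p"
    using assms by (intro d_triangle) auto
  moreover have "d q p \<le> diam d C"
    using dist_le_diam[OF finite_if_subset_X[OF assms(2)] assms(4,3)] .
  ultimately show ?thesis by linarith
qed

lemma diam_le_cost_if_no_separating_ball:
  assumes "S \<subseteq> X" "S \<noteq> {}" and P: "is_clustering r S P"
    and cut: "\<forall>R < nat (diam d S). \<exists>C\<in>P. \<not> C \<subseteq> ball_part S R \<and> \<not> C \<subseteq> S - ball_part S R"
  shows "diam d S \<le> cost d P"
proof -
  define x where "x = pick S"
  have "x \<in> S"
    using pick_diametral assms(1,2) by (simp add: x_def)
  have members: "C \<subseteq> S" "C \<subseteq> X" "finite C" if "C \<in> P" for C
    using P that assms(1) finite_if_subset_X by (auto simp: is_clustering_def)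
  have "diam d S - 0 \<le> (\<Sum>C\<in>P. diam d C)"
  proof (rule interval_le_sum_if_thresholds_crossed[where f = "d x"])
    show "finite P"
      using P by (simp add: is_clustering_def)
    show "{0..<diam d S} \<subseteq> (\<Union>C\<in>P. thresholds_crossed (d x) C)"
    proof
      fix R assume "R \<in> {0..<diam d S}"
      then have "nat R < nat (diam d S)" "R = int (nat R)"
        by auto
      then obtain C where C: "C \<in> P" "\<not> C \<subseteq> ball_part S (nat R)" "\<not> C \<subseteq> S - ball_part S (nat R)"
        using cut by blast
      then have "int (nat R) \<in> thresholds_crossed (d x) C"
        unfolding x_def using radius_in_thresholds_crossed members(1) by blast
      then show "R \<in> (\<Union>C\<in>P. thresholds_crossed (d x) C)"
        using C(1) \<open>R = int (nat R)\<close> by auto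
    qed
    show "finite C" "0 \<le> diam d C" if "C \<in> P" for C
      using members[OF that] diam_nonneg_if_subset_X by simp_all
    show "d x p - d x q \<le> diam d C" if "C \<in> P" "p \<in> C" "q \<in> C" for C p q
      using dist_diff_le_diam[OF _ members(2)[OF that(1)] that(2,3)] \<open>x \<in> S\<close> assms(1) by blast
  qed
  then show ?thesis
    by (simp add: cost_def)
qed

definition split_candidates :: "nat \<Rightarrow> 'a set \<Rightarrow> (nat \<times> 'a set set) list" where
  "split_candidates t S =
     concat (map (\<lambda>R. map (\<lambda>(i, j). (i + j,
         detRecMSD pick d t (ball_part S R) i \<union> detRecMSD pick d t (S - ball_part S R) j))
       (index_pairs t)) [0..<nat (diam d S)])"

lemma detRecMSD_Suc_eq_fold:
  "t \<noteq> 0 \<Longrightarrow> card S \<noteq> 1 \<Longrightarrow>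
   detRecMSD pick d (Suc t) S = fold (keep_cheaper (cost d)) (split_candidates t S) (\<lambda>i. {S})"
  by (simp add: split_candidates_def index_pairs_def ball_part_def fold_concat_map fold_keep_cheaper_map Let_def)

lemma mem_split_candidates:
  "(k, Y) \<in> set (split_candidates t S) \<longleftrightarrow>
   (\<exists>R < nat (diam d S). \<exists>i j. 1 \<le> i \<and> 1 \<le> j \<and> i + j \<le> Suc t \<and> k = i + j \<and>
      Y = detRecMSD pick d t (ball_part S R) i \<union> detRecMSD pick d t (S - ball_part S R) j)"
  by (force simp: split_candidates_def mem_index_pairs simp del: detRecMSD.simps)

context
  fixes t :: nat
  assumes optimal_below: "\<And>T i. T \<subseteq> X \<Longrightarrow> T \<noteq> {} \<Longrightarrow> 1 \<le> i \<Longrightarrow> i \<le> t \<Longrightarrow>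
    optimal_clustering d i T (detRecMSD pick d t T i)"
begin

lemma optimal_on_parts:
  assumes "S \<subseteq> X" "S \<noteq> {}" "R < nat (diam d S)" "1 \<le> i" "1 \<le> j" "i + j \<le> Suc t"
  shows "optimal_clustering d i (ball_part S R) (detRecMSD pick d t (ball_part S R) i)"
    and "optimal_clustering d j (S - ball_part S R) (detRecMSD pick d t (S - ball_part S R) j)"
proof -
  have parts: "ball_part S R \<subseteq> X" "ball_part S R \<noteq> {}" "S - ball_part S R \<subseteq> X" "S - ball_part S R \<noteq> {}"
    using assms(1) ball_part_subset pick_in_ball_part[OF assms(1,2)]
      outside_ball_part_nonempty[OF assms(1-3)] by blast+
  show "optimal_clustering d i (ball_part S R) (detRecMSD pick d t (ball_part S R) i)"
    using optimal_below[OF parts(1,2)] assms(4-6) by simp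
  show "optimal_clustering d j (S - ball_part S R) (detRecMSD pick d t (S - ball_part S R) j)"
    using optimal_below[OF parts(3,4)] assms(4-6) by simp
qed

lemma split_candidate_is_clustering:
  assumes "S \<subseteq> X" "S \<noteq> {}" "(k, Y) \<in> set (split_candidates t S)"
  shows "is_clustering k S Y"
proof -
  obtain R i j where R: "R < nat (diam d S)" and ij: "1 \<le> i" "1 \<le> j" "i + j \<le> Suc t"
    and k: "k = i + j"
    and Y: "Y = detRecMSD pick d t (ball_part S R) i \<union> detRecMSD pick d t (S - ball_part S R) j"
    using assms(3) unfolding mem_split_candidates by blast
  have "is_clustering (i + j) (ball_part S R \<union> (S - ball_part S R)) Y"
    unfolding Y using optimal_on_parts[OF assms(1,2) R ij]
    by (intro is_clustering_Un) (simp_all add: optimal_clustering_def)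
  moreover have "ball_part S R \<union> (S - ball_part S R) = S"
    using ball_part_subset by blast
  ultimately show ?thesis
    by (simp add: k)
qed

lemma split_candidate_cost_le:
  assumes "S \<subseteq> X" "S \<noteq> {}" "R < nat (diam d S)" "1 \<le> i" "1 \<le> j" "i + j \<le> Suc t"
    and PA: "is_clustering i (ball_part S R) PA" and PB: "is_clustering j (S - ball_part S R) PB"
  obtains Y where "(i + j, Y) \<in> set (split_candidates t S)" "cost d Y \<le> cost d PA + cost d PB"
proof
  let ?A = "detRecMSD pick d t (ball_part S R) i" and ?B = "detRecMSD pick d t (S - ball_part S R) j"
  show "(i + j, ?A \<union> ?B) \<in> set (split_candidates t S)"
    unfolding mem_split_candidates using assms(3-6) by blast
  have A: "is_clustering i (ball_part S R) ?A" "cost d ?A \<le> cost d PA"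
    and B: "is_clustering j (S - ball_part S R) ?B" "cost d ?B \<le> cost d PB"
    using optimal_on_parts[OF assms(1-6)] PA PB unfolding optimal_clustering_def by simp_all
  have "cost d (?A \<union> ?B) \<le> cost d ?A + cost d ?B"
    using cost_Un_le_if_clusterings[OF A(1) B(1)] ball_part_subset[of S R] assms(1) by blast
  then show "cost d (?A \<union> ?B) \<le> cost d PA + cost d PB"
    using A(2) B(2) by linarith
qed

lemma split_candidate_le_separated:
  assumes S: "S \<subseteq> X" "S \<noteq> {}" and P: "is_clustering r S P" "r \<le> Suc t"
    and R: "R < nat (diam d S)" and sep: "\<forall>C\<in>P. C \<subseteq> ball_part S R \<or> C \<subseteq> S - ball_part S R"
  obtains Y where "(r, Y) \<in> set (split_candidates t S)" "cost d Y \<le> cost d P"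
proof -
  obtain i j PA PB where ij: "1 \<le> i" "1 \<le> j" "i + j = r"
    and PA: "is_clustering i (ball_part S R) PA" and PB: "is_clustering j (S - ball_part S R) PB"
    and split: "P = PA \<union> PB" "PA \<inter> PB = {}"
  proof (rule is_clustering_split[OF P(1) ball_part_subset])
    show "ball_part S R \<noteq> {}"
      using pick_in_ball_part[OF S] by blast
  qed (use outside_ball_part_nonempty[OF S R] sep in auto)
  have "i + j \<le> Suc t"
    using ij(3) P(2) by simp
  then obtain Y where "(i + j, Y) \<in> set (split_candidates t S)" "cost d Y \<le> cost d PA + cost d PB"
    using split_candidate_cost_le[OF S R ij(1,2) _ PA PB] by blast
  moreover have "cost d P = cost d PA + cost d PB"
    using PA PB split unfolding cost_def is_clustering_def by (simp add: sum.union_disjoint)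
  ultimately show ?thesis
    using that ij(3) by simp
qed

lemma split_candidate_le_diam:
  assumes S: "S \<subseteq> X" "S \<noteq> {}" "card S \<noteq> 1" and r: "2 \<le> r" "r \<le> Suc t"
  obtains Y where "(r, Y) \<in> set (split_candidates t S)" "cost d Y \<le> diam d S"
proof -
  define x where "x = pick S"
  have R: "0 < nat (diam d S)"
    using diam_pos[OF S] by simp
  have x: "ball_part S 0 = {x}"
    using ball_part_0[OF S(1,2)] by (simp add: x_def)
  have "diam d {x} = 0"
    using d_eq_0_iff pick_diametral S(1,2) by (auto simp: x_def diam_singleton)
  moreover have "diam d (S - {x}) \<le> diam d S"
    using diam_mono outside_ball_part_nonempty[OF S(1,2) R] finite_if_subset_X[OF S(1)] x
    by (metis Diff_subset)
  ultimately have cost_le: "cost d {ball_part S 0} + cost d {S - ball_part S 0} \<le> diam d S"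
    using x by (simp add: cost_def)
  have r': "1 \<le> r - 1" "1 + (r - 1) \<le> Suc t" "1 + (r - 1) = r"
    using r by auto
  obtain Y where "(1 + (r - 1), Y) \<in> set (split_candidates t S)"
    "cost d Y \<le> cost d {ball_part S 0} + cost d {S - ball_part S 0}"
    using split_candidate_cost_le[OF S(1,2) R order.refl r'(1,2)
        is_clustering_singleton[OF order.refl] is_clustering_singleton[OF r'(1)]] by blast
  then show ?thesis
    using that r'(3) cost_le by auto
qed

lemma split_candidate_le_clustering:
  assumes S: "S \<subseteq> X" "S \<noteq> {}" "card S \<noteq> 1"
    and P: "is_clustering r S P" and r: "2 \<le> r" "r \<le> Suc t"
  obtains Y where "(r, Y) \<in> set (split_candidates t S)" "cost d Y \<le> cost d P"
proof (cases "\<exists>R < nat (diam d S). \<forall>C\<in>P. C \<subseteq> ball_part S R \<or> C \<subseteq> S - ball_part S R")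
  case True
  then show ?thesis
    using split_candidate_le_separated[OF S(1,2) P r(2)] that by blast
next
  case False
  then have "diam d S \<le> cost d P"
    using diam_le_cost_if_no_separating_ball[OF S(1,2) P] by blast
  then show ?thesis
    using split_candidate_le_diam[OF S r] that order.trans by metis
qed

lemma detRecMSD_Suc_optimal:
  assumes "t \<noteq> 0" "card S \<noteq> 1" "S \<subseteq> X" "S \<noteq> {}" "1 \<le> r" "r \<le> Suc t"
  shows "optimal_clustering d r S (detRecMSD pick d (Suc t) S r)"
proof -
  let ?C = "fold (keep_cheaper (cost d)) (split_candidates t S) (\<lambda>i. {S})"
  have "is_clustering r S (?C r)"
    using fold_keep_cheaper_cases[of "cost d" "split_candidates t S" "\<lambda>i. {S}" r]
      is_clustering_singleton[OF assms(5)] split_candidate_is_clustering[OF assms(3,4)]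
    by auto
  moreover have "cost d (?C r) \<le> cost d P" if P: "is_clustering r S P" for P
  proof (cases "r = 1")
    case True
    then have "P = {S}"
      using is_clustering_1 P assms(4) by simp
    then show ?thesis
      using fold_keep_cheaper_le_init[of "cost d" _ "\<lambda>i. {S}"] by simp
  next
    case False
    then obtain Y where "(r, Y) \<in> set (split_candidates t S)" "cost d Y \<le> cost d P"
      using split_candidate_le_clustering[OF assms(3,4,2) P] assms(5,6) by force
    then show ?thesis
      using order.trans[OF fold_keep_cheaper_le_candidate[of r Y "split_candidates t S" "cost d"]] by blast
  qed
  ultimately show ?thesis
    using detRecMSD_Suc_eq_fold[OF assms(1,2)] by (simp add: optimal_clustering_def)
qed

end

lemma singleton_optimal_clustering:
  assumes "S \<subseteq> X" "S \<noteq> {}" "1 \<le> r" "r = 1 \<or> card S = 1"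
  shows "optimal_clustering d r S {S}"
  unfolding optimal_clustering_def
proof (intro conjI allI impI)
  show "is_clustering r S {S}"
    using assms(3) by (rule is_clustering_singleton)
  fix P assume P: "is_clustering r S P"
  show "cost d {S} \<le> cost d P"
  proof (cases "r = 1")
    case True
    then have "P = {S}"
      using is_clustering_1 P assms(2) by blast
    then show ?thesis
      by simp
  next
    case False
    then obtain p where "S = {p}" "p \<in> X"
      using assms(1,4) card_1_singletonE by blast
    then have "cost d {S} = 0"
      using d_eq_0_iff by (simp add: cost_def diam_singleton)
    then show ?thesis
      using cost_nonneg[OF P assms(1)] by simp
  qed
qed

theorem detRecMSD_optimal:
  "S \<subseteq> X \<Longrightarrow> S \<noteq> {} \<Longrightarrow> 1 \<le> r \<Longrightarrow> r \<le> t \<Longrightarrow>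
   optimal_clustering d r S (detRecMSD pick d t S r)"
proof (induction t arbitrary: S r)
  case (Suc t)
  show ?case
  proof (cases "t = 0 \<or> card S = 1")
    case True
    then have "r = 1 \<or> card S = 1"
      using Suc.prems(3,4) by auto
    then show ?thesis
      using True singleton_optimal_clustering[OF Suc.prems(1-3)] by auto
  next
    case False
    then show ?thesis
      using detRecMSD_Suc_optimal[OF Suc.IH] Suc.prems by blast
  qed
qed simp

end

theorem lemma5:
  fixes X :: "'a set" and d :: "'a \<Rightarrow> 'a \<Rightarrow> int" and k :: nat and \<epsilon> :: real
    and pick :: "'a set \<Rightarrow> 'a" and S :: "'a set" and t :: nat and r :: nat
  assumes finX: "finite X"
    and d_zero: "\<forall>p\<in>X. \<forall>q\<in>X. d p q = 0 \<longleftrightarrow> p = q"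
    and d_sym: "\<forall>p\<in>X. \<forall>q\<in>X. d p q = d q p"
    and d_tri: "\<forall>p\<in>X. \<forall>q\<in>X. \<forall>z\<in>X. d p z \<le> d p q + d q z"
    and d_nonneg: "\<forall>p\<in>X. \<forall>q\<in>X. 0 \<le> d p q"
    and d_bound: "\<forall>p\<in>X. \<forall>q\<in>X. real_of_int (d p q) \<le> 16 * real k / \<epsilon>"
    and k_pos: "k \<ge> 1" and eps_pos: "\<epsilon> > 0"
    and pick: "\<forall>T. T \<subseteq> X \<and> T \<noteq> {} \<longrightarrow>
                 pick T \<in> T \<and> (\<exists>y\<in>T. d (pick T) y = diam d T)"
    and S: "S \<subseteq> X" "S \<noteq> {}"
    and t: "1 \<le> t" "t \<le> k"
    and r: "1 \<le> r" "r \<le> t"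
  shows "cost d (detRecMSD pick d t S r) = opt d r S"
proof -
  interpret diametral_pick X d pick
    using finX d_zero d_tri d_nonneg pick by unfold_locales blast+
  have "optimal_clustering d r S (detRecMSD pick d t S r)"
    using detRecMSD_optimal S r by blast
  then have "opt d r S = cost d (detRecMSD pick d t S r)"
    by (rule opt_eq_cost_if_optimal_clustering[OF finite_if_subset_X[OF S(1)]])
  then show ?thesis
    by simp
qed

end
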